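(* Let $\mathbf t:\mathcal D\to\mathcal T$ be any refinement system and $Q\sqsubset B$. Then there are natural isomorphisms of presheaves $Q^{-}\cong(Q^{+})^{\perp}$ (on $B^{-}$) and $Q^{+}\cong{}^{\perp}(Q^{-})$ (on $B^{+}$), where the duals are taken with respect to $B$.
   Context: A refinement system is a functor $\mathbf{t}:\mathcal{D}\to\mathcal{T}$; composition is diagrammatic ($c;d$ = first $c$ then $d$). Write $P\sqsubset A$ if $\mathbf t(P)=A$; a derivation of $P\Rightarrow_cQ$ ($c:A\to B$) is a morphism $\alpha:P\to Q$ of $\mathcal D$ with $\mathbf t(\alpha)=c$. Relative slice: $B^{+}$ has objects $(P,c)$ with $P\sqsubset X$, $c:X\to B$, and morphisms $(P_1,c_1)\to(P_2,c_2)$ the derivations of $P_1\Rightarrow_eP_2$ with $c_1=e;c_2$. For $Q\sqsubset B$, $Q^{+}:(B^{+})^{op}\to\mathbf{Set}$ sends $(P,c)$ to the set of derivations of $P\Rightarrow_cQ$, acting on morphisms by precomposition. Relative coslice: the category with objects $(d,R)$, $d:B\to Y$, $R\sqsubset Y$, and morphisms $(d_1,R_1)\to(d_2,R_2)$ the derivations of $R_1\Rightarrow_eR_2$ with $d_1;e=d_2$; $B^{-}$ is its opposite. $Q^{-}:(B^{-})^{op}\to\mathbf{Set}$ sends $(d,R)$ to the set of derivations of $Q\Rightarrow_dR$, acting by postcomposition. The category of judgments $\mathrm{Jdg}(\mathbf t)$ has objects triples $(P,c,R)$ with $P\sqsubset X$, $c:X\to Y$, $R\sqsubset Y$; morphisms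 $(P_1,c_1,R_1)\to(P_2,c_2,R_2)$ are pairs of derivations $\beta$ of $P_1\Rightarrow_eP_2$ and $\gamma$ of $R_2\Rightarrow_{e'}R_1$ with $c_1=e;c_2;e'$. The presheaf of derivations $\mathrm{Der}:\mathrm{Jdg}(\mathbf t)^{op}\to\mathbf{Set}$ sends $(P,c,R)$ to the set of derivations of $P\Rightarrow_cR$, and $(\beta,\gamma)$ to $\alpha\mapsto\beta;\alpha;\gamma$. The bracket functor $\langle-\mid-\rangle_B:B^{+}\times B^{-}\to\mathrm{Jdg}(\mathbf t)$ sends $((P,c),(d,R))\mapsto(P,c;d,R)$ and a pair of morphisms (given by derivations $\beta$, $\gamma$) to $(\beta,\gamma)$. Duals with respect to $B$: for a presheaf $\phi$ on $B^{+}$, $\phi^{\perp}$ is the presheaf on $B^{-}$ with $\phi^{\perp}(y)=$ the set of natural transformations $\phi\Rightarrow\mathrm{Der}(\langle-\mid y\rangle_B)$ of presheaves on $B^{+}$; for a presheaf $\psi$ on $B^{-}$, ${}^{\perp}\psi$ is the presheaf on $B^{+}$ with ${}^{\perp}\psi(x)=$ the set of natural transformations $\psi\Rightarrow\mathrm{Der}(\langle x\mid-\rangle_B)$ of presheaves on $B^{-}$ (functorial in $y$, resp. $x$, via the bracket). *)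

theory Defs
  imports Main
begin

record ('o,'a) cat =
  Ob :: "'o set"
  Ar :: "'a set"
  Dom :: "'a \<Rightarrow> 'o"
  Cod :: "'a \<Rightarrow> 'o"
  Id :: "'o \<Rightarrow> 'a"
  Comp :: "'a \<Rightarrow> 'a \<Rightarrow> 'a"   (* Comp C f g = f ; g : first f then g *)

definition is_category :: "('o,'a) cat \<Rightarrow> bool" where
  "is_category C \<longleftrightarrow>
     (\<forall>f\<in>Ar C. Dom C f \<in> Ob C \<and> Cod C f \<in> Ob C) \<and>
     (\<forall>a\<in>Ob C. Id C a \<in> Ar C \<and> Dom C (Id C a) = a \<and> Cod C (Id C a) = a) \<and>
     (\<forall>f\<in>Ar C. \<forall>g\<in>Ar C. Cod C f = Dom C g \<longrightarrow>
        Comp C f g \<in> Ar C \<and> Dom C (Comp C f g) = Dom C f \<and> Cod C (Comp C f g) = Cod C g) \<and>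
     (\<forall>f\<in>Ar C. Comp C (Id C (Dom C f)) f = f \<and> Comp C f (Id C (Cod C f)) = f) \<and>
     (\<forall>f\<in>Ar C. \<forall>g\<in>Ar C. \<forall>h\<in>Ar C. Cod C f = Dom C g \<longrightarrow> Cod C g = Dom C h \<longrightarrow>
        Comp C (Comp C f g) h = Comp C f (Comp C g h))"

definition is_functor :: "('o,'a) cat \<Rightarrow> ('x,'c) cat \<Rightarrow> ('o \<Rightarrow> 'x) \<Rightarrow> ('a \<Rightarrow> 'c) \<Rightarrow> bool" where
  "is_functor C E Fo Fa \<longleftrightarrow>
     (\<forall>a\<in>Ob C. Fo a \<in> Ob E) \<and>
     (\<forall>f\<in>Ar C. Fa f \<in> Ar E \<and> Dom E (Fa f) = Fo (Dom C f) \<and> Cod E (Fa f) = Fo (Cod C f)) \<and>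
     (\<forall>a\<in>Ob C. Fa (Id C a) = Id E (Fo a)) \<and>
     (\<forall>f\<in>Ar C. \<forall>g\<in>Ar C. Cod C f = Dom C g \<longrightarrow> Fa (Comp C f g) = Comp E (Fa f) (Fa g))"

text \<open>A category is presented by its object set and hom-sets \<open>hom a b\<close>.
  A presheaf \<open>(F, Fm)\<close> on it has value sets \<open>F a\<close> and, for \<open>f \<in> hom a b\<close>,
  the action \<open>Fm f : F b \<rightarrow> F a\<close>.  The set of natural transformations is taken
  extensionally (values \<open>undefined\<close> off the domain).\<close>

definition nat_trans ::
  "'ob set \<Rightarrow> ('ob \<Rightarrow> 'ob \<Rightarrow> 'm set) \<Rightarrow> ('ob \<Rightarrow> 'v set) \<Rightarrow> ('m \<Rightarrow> 'v \<Rightarrow> 'v)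
     \<Rightarrow> ('ob \<Rightarrow> 'w set) \<Rightarrow> ('m \<Rightarrow> 'w \<Rightarrow> 'w) \<Rightarrow> ('ob \<Rightarrow> 'v \<Rightarrow> 'w) set" where
  "nat_trans obs hom F Fm G Gm =
     {\<eta>. (\<forall>a\<in>obs. \<forall>v\<in>F a. \<eta> a v \<in> G a) \<and>
          (\<forall>a\<in>obs. \<forall>b\<in>obs. \<forall>f\<in>hom a b. \<forall>v\<in>F b. \<eta> a (Fm f v) = Gm f (\<eta> b v)) \<and>
          (\<forall>a v. (a \<notin> obs \<or> v \<notin> F a) \<longrightarrow> \<eta> a v = undefined)}"

definition nat_iso ::
  "'ob set \<Rightarrow> ('ob \<Rightarrow> 'ob \<Rightarrow> 'm set) \<Rightarrow> ('ob \<Rightarrow> 'v set) \<Rightarrow> ('m \<Rightarrow> 'v \<Rightarrow> 'v)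
     \<Rightarrow> ('ob \<Rightarrow> 'w set) \<Rightarrow> ('m \<Rightarrow> 'w \<Rightarrow> 'w) \<Rightarrow> bool" where
  "nat_iso obs hom F Fm G Gm \<longleftrightarrow>
     (\<exists>\<theta>. (\<forall>a\<in>obs. bij_betw (\<theta> a) (F a) (G a)) \<and>
          (\<forall>a\<in>obs. \<forall>b\<in>obs. \<forall>f\<in>hom a b. \<forall>v\<in>F b. \<theta> a (Fm f v) = Gm f (\<theta> b v)))"

text \<open>This is also the presheaf Der on judgments \<open>(P,c,R)\<close>.\<close>
definition Der :: "('o,'a) cat \<Rightarrow> ('a \<Rightarrow> 'c) \<Rightarrow> 'o \<Rightarrow> 'c \<Rightarrow> 'o \<Rightarrow> 'a set" where
  "Der D ta P c R = {\<alpha>\<in>Ar D. Dom D \<alpha> = P \<and> Cod D \<alpha> = R \<and> ta \<alpha> = c}"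

definition Der_act :: "('o,'a) cat \<Rightarrow> 'a \<Rightarrow> 'a \<Rightarrow> 'a \<Rightarrow> 'a" where
  "Der_act D \<beta> \<gamma> \<alpha> = Comp D (Comp D \<beta> \<alpha>) \<gamma>"

definition plus_obs :: "('o,'a) cat \<Rightarrow> ('x,'c) cat \<Rightarrow> ('o \<Rightarrow> 'x) \<Rightarrow> 'x \<Rightarrow> ('o \<times> 'c) set" where
  "plus_obs D T to B = {(P,c). P \<in> Ob D \<and> c \<in> Ar T \<and> Dom T c = to P \<and> Cod T c = B}"

definition plus_hom :: "('o,'a) cat \<Rightarrow> ('x,'c) cat \<Rightarrow> ('a \<Rightarrow> 'c) \<Rightarrow> ('o \<times> 'c) \<Rightarrow> ('o \<times> 'c) \<Rightarrow> 'a set" where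
  "plus_hom D T ta x1 x2 =
     {\<beta>\<in>Ar D. Dom D \<beta> = fst x1 \<and> Cod D \<beta> = fst x2 \<and> snd x1 = Comp T (ta \<beta>) (snd x2)}"

text \<open>Relative coslice: objects \<open>(d,R)\<close>; morphisms \<open>(d1,R1) \<rightarrow> (d2,R2)\<close> are derivations
  \<open>\<gamma>\<close> of \<open>R1 \<Rightarrow>_e R2\<close> with \<open>d1;e = d2\<close>.  \<open>B\<^sup>-\<close> is its opposite.\<close>
definition minus_obs :: "('o,'a) cat \<Rightarrow> ('x,'c) cat \<Rightarrow> ('o \<Rightarrow> 'x) \<Rightarrow> 'x \<Rightarrow> ('c \<times> 'o) set" where
  "minus_obs D T to B = {(d,R). d \<in> Ar T \<and> R \<in> Ob D \<and> Dom T d = B \<and> Cod T d = to R}"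

definition coslice_hom :: "('o,'a) cat \<Rightarrow> ('x,'c) cat \<Rightarrow> ('a \<Rightarrow> 'c) \<Rightarrow> ('c \<times> 'o) \<Rightarrow> ('c \<times> 'o) \<Rightarrow> 'a set" where
  "coslice_hom D T ta y1 y2 =
     {\<gamma>\<in>Ar D. Dom D \<gamma> = snd y1 \<and> Cod D \<gamma> = snd y2 \<and> Comp T (fst y1) (ta \<gamma>) = fst y2}"

definition minus_hom :: "('o,'a) cat \<Rightarrow> ('x,'c) cat \<Rightarrow> ('a \<Rightarrow> 'c) \<Rightarrow> ('c \<times> 'o) \<Rightarrow> ('c \<times> 'o) \<Rightarrow> 'a set" where
  "minus_hom D T ta y1 y2 = coslice_hom D T ta y2 y1"

definition Qplus :: "('o,'a) cat \<Rightarrow> ('a \<Rightarrow> 'c) \<Rightarrow> 'o \<Rightarrow> ('o \<times> 'c) \<Rightarrow> 'a set" where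
  "Qplus D ta Q x = Der D ta (fst x) (snd x) Q"

definition Qplus_act :: "('o,'a) cat \<Rightarrow> 'a \<Rightarrow> 'a \<Rightarrow> 'a" where
  "Qplus_act D \<beta> \<alpha> = Comp D \<beta> \<alpha>"

definition Qminus :: "('o,'a) cat \<Rightarrow> ('a \<Rightarrow> 'c) \<Rightarrow> 'o \<Rightarrow> ('c \<times> 'o) \<Rightarrow> 'a set" where
  "Qminus D ta Q y = Der D ta Q (fst y) (snd y)"

definition Qminus_act :: "('o,'a) cat \<Rightarrow> 'a \<Rightarrow> 'a \<Rightarrow> 'a" where
  "Qminus_act D \<gamma> \<alpha> = Comp D \<alpha> \<gamma>"

text \<open>Bracket: \<open>\<langle>(P,c) | (d,R)\<rangle> = (P, c;d, R)\<close>; on morphisms \<open>(\<beta>,\<gamma>) \<mapsto> (\<beta>,\<gamma>)\<close>.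
  So \<open>Der \<langle>- | y\<rangle>\<close> is a presheaf on \<open>B\<^sup>+\<close> with action \<open>\<beta> \<mapsto> Der_act (\<beta>, id_R)\<close>, and
  \<open>Der \<langle>x | -\<rangle>\<close> a presheaf on \<open>B\<^sup>-\<close> with action \<open>\<gamma> \<mapsto> Der_act (id_P, \<gamma>)\<close>.\<close>

definition Der_bra_right :: "('o,'a) cat \<Rightarrow> ('x,'c) cat \<Rightarrow> ('a \<Rightarrow> 'c) \<Rightarrow> ('c \<times> 'o) \<Rightarrow> ('o \<times> 'c) \<Rightarrow> 'a set" where
  "Der_bra_right D T ta y x = Der D ta (fst x) (Comp T (snd x) (fst y)) (snd y)"

definition Der_bra_left :: "('o,'a) cat \<Rightarrow> ('x,'c) cat \<Rightarrow> ('a \<Rightarrow> 'c) \<Rightarrow> ('o \<times> 'c) \<Rightarrow> ('c \<times> 'o) \<Rightarrow> 'a set" where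
  "Der_bra_left D T ta x y = Der D ta (fst x) (Comp T (snd x) (fst y)) (snd y)"

definition perp_right ::
  "('o,'a) cat \<Rightarrow> ('x,'c) cat \<Rightarrow> ('o \<Rightarrow> 'x) \<Rightarrow> ('a \<Rightarrow> 'c) \<Rightarrow> 'x
     \<Rightarrow> (('o \<times> 'c) \<Rightarrow> 'v set) \<Rightarrow> ('a \<Rightarrow> 'v \<Rightarrow> 'v) \<Rightarrow> ('c \<times> 'o) \<Rightarrow> (('o \<times> 'c) \<Rightarrow> 'v \<Rightarrow> 'a) set" where
  "perp_right D T to ta B F Fm y =
     nat_trans (plus_obs D T to B) (plus_hom D T ta) F Fm
       (Der_bra_right D T ta y) (\<lambda>\<beta>. Der_act D \<beta> (Id D (snd y)))"

definition perp_right_act ::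
  "('o,'a) cat \<Rightarrow> ('x,'c) cat \<Rightarrow> ('o \<Rightarrow> 'x) \<Rightarrow> 'x \<Rightarrow> (('o \<times> 'c) \<Rightarrow> 'v set)
     \<Rightarrow> 'a \<Rightarrow> (('o \<times> 'c) \<Rightarrow> 'v \<Rightarrow> 'a) \<Rightarrow> (('o \<times> 'c) \<Rightarrow> 'v \<Rightarrow> 'a)" where
  "perp_right_act D T to B F \<gamma> \<eta> =
     (\<lambda>x v. if x \<in> plus_obs D T to B \<and> v \<in> F x then Der_act D (Id D (fst x)) \<gamma> (\<eta> x v) else undefined)"

definition perp_left ::
  "('o,'a) cat \<Rightarrow> ('x,'c) cat \<Rightarrow> ('o \<Rightarrow> 'x) \<Rightarrow> ('a \<Rightarrow> 'c) \<Rightarrow> 'x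
     \<Rightarrow> (('c \<times> 'o) \<Rightarrow> 'w set) \<Rightarrow> ('a \<Rightarrow> 'w \<Rightarrow> 'w) \<Rightarrow> ('o \<times> 'c) \<Rightarrow> (('c \<times> 'o) \<Rightarrow> 'w \<Rightarrow> 'a) set" where
  "perp_left D T to ta B G Gm x =
     nat_trans (minus_obs D T to B) (minus_hom D T ta) G Gm
       (Der_bra_left D T ta x) (\<lambda>\<gamma>. Der_act D (Id D (fst x)) \<gamma>)"

definition perp_left_act ::
  "('o,'a) cat \<Rightarrow> ('x,'c) cat \<Rightarrow> ('o \<Rightarrow> 'x) \<Rightarrow> 'x \<Rightarrow> (('c \<times> 'o) \<Rightarrow> 'w set)
     \<Rightarrow> 'a \<Rightarrow> (('c \<times> 'o) \<Rightarrow> 'w \<Rightarrow> 'a) \<Rightarrow> (('c \<times> 'o) \<Rightarrow> 'w \<Rightarrow> 'a)" where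
  "perp_left_act D T to B G \<beta> \<zeta> =
     (\<lambda>y v. if y \<in> minus_obs D T to B \<and> v \<in> G y then Der_act D \<beta> (Id D (snd y)) (\<zeta> y v) else undefined)"

end

theory Submission
  imports Defs
begin

text \<open>
  Both isomorphisms are instances of the Yoneda lemma.  The presheaf \<open>Q\<^sup>+\<close> is represented by
  \<open>(Q, id\<^sub>B)\<close> in \<open>B\<^sup>+\<close>, with universal element \<open>id\<^sub>Q\<close>: a derivation of \<open>P \<Rightarrow>\<^sub>c Q\<close> is the same as a
  morphism \<open>(P, c) \<rightarrow> (Q, id\<^sub>B)\<close>.  Hence a natural transformation \<open>Q\<^sup>+ \<Rightarrow> Der \<langle>- | (d, R)\<rangle>\<close> is
  determined by its value at \<open>id\<^sub>Q\<close>, an element of \<open>Der \<langle>(Q, id\<^sub>B) | (d, R)\<rangle> = Q\<^sup>-(d, R)\<close>, and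
  conversely \<open>\<alpha>\<close> induces \<open>v \<mapsto> v;\<alpha>\<close>.  Dually \<open>Q\<^sup>-\<close> is represented by \<open>(id\<^sub>B, Q)\<close> in \<open>B\<^sup>-\<close>.
\<close>

definition yoneda_ext :: "'ob set \<Rightarrow> ('ob \<Rightarrow> 'm set) \<Rightarrow> ('m \<Rightarrow> 'w \<Rightarrow> 'w) \<Rightarrow> 'w \<Rightarrow> ('ob \<Rightarrow> 'm \<Rightarrow> 'w)" where
  "yoneda_ext obs F Gm g = (\<lambda>a v. if a \<in> obs \<and> v \<in> F a then Gm v g else undefined)"

text \<open>The hypotheses say that \<open>F\<close> is the representable presheaf \<open>hom(-, x0)\<close>, with \<open>Fm\<close> as
  composition and \<open>u\<close> as the identity of \<open>x0\<close>, and that \<open>G\<close> acts functorially along it.\<close>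

lemma bij_betw_yoneda_ext:
  assumes x0: "x0 \<in> obs" and u: "u \<in> F x0"
    and F_repr: "\<And>a v. a \<in> obs \<Longrightarrow> v \<in> F a \<Longrightarrow> v \<in> hom a x0 \<and> Fm v u = v"
    and G_unit: "\<And>g. g \<in> G x0 \<Longrightarrow> Gm u g = g"
    and G_closed: "\<And>a v g. a \<in> obs \<Longrightarrow> v \<in> F a \<Longrightarrow> g \<in> G x0 \<Longrightarrow> Gm v g \<in> G a"
    and G_comp: "\<And>a b f v g. a \<in> obs \<Longrightarrow> b \<in> obs \<Longrightarrow> f \<in> hom a b \<Longrightarrow> v \<in> F b \<Longrightarrow> g \<in> G x0 \<Longrightarrow>
                   Fm f v \<in> F a \<and> Gm (Fm f v) g = Gm f (Gm v g)"
  shows "bij_betw (yoneda_ext obs F Gm) (G x0) (nat_trans obs hom F Fm G Gm)"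
proof (rule bij_betw_byWitness[where f' = "\<lambda>\<eta>. \<eta> x0 u"])
  show "\<forall>g\<in>G x0. yoneda_ext obs F Gm g x0 u = g"
    using x0 u G_unit by (simp add: yoneda_ext_def)
  show "\<forall>\<eta>\<in>nat_trans obs hom F Fm G Gm. yoneda_ext obs F Gm (\<eta> x0 u) = \<eta>"
  proof (intro ballI ext)
    fix \<eta> a v assume \<eta>: "\<eta> \<in> nat_trans obs hom F Fm G Gm"
    show "yoneda_ext obs F Gm (\<eta> x0 u) a v = \<eta> a v"
    proof (cases "a \<in> obs \<and> v \<in> F a")
      case True
      then have "\<eta> a (Fm v u) = Gm v (\<eta> x0 u)" and "Fm v u = v"
        using \<eta> x0 u F_repr unfolding nat_trans_def by blast+
      with True show ?thesis by (simp add: yoneda_ext_def)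
    next
      case False
      with \<eta> show ?thesis by (auto simp: yoneda_ext_def nat_trans_def)
    qed
  qed
  show "yoneda_ext obs F Gm ` G x0 \<subseteq> nat_trans obs hom F Fm G Gm"
    using G_closed G_comp by (auto simp: yoneda_ext_def nat_trans_def)
  show "(\<lambda>\<eta>. \<eta> x0 u) ` nat_trans obs hom F Fm G Gm \<subseteq> G x0"
    using x0 u by (auto simp: nat_trans_def)
qed

lemma category_Comp:
  assumes "is_category C" "f \<in> Ar C" "g \<in> Ar C" "Cod C f = Dom C g"
  shows "Comp C f g \<in> Ar C" "Dom C (Comp C f g) = Dom C f" "Cod C (Comp C f g) = Cod C g"
  using assms unfolding is_category_def by blast+

lemma category_Id:
  assumes "is_category C" "a \<in> Ob C"
  shows "Id C a \<in> Ar C" "Dom C (Id C a) = a" "Cod C (Id C a) = a"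
  using assms unfolding is_category_def by blast+

lemma category_Comp_Id_left:
  assumes "is_category C" "f \<in> Ar C" "Dom C f = a"
  shows "Comp C (Id C a) f = f"
  using assms unfolding is_category_def by blast

lemma category_Comp_Id_right:
  assumes "is_category C" "f \<in> Ar C" "Cod C f = b"
  shows "Comp C f (Id C b) = f"
  using assms unfolding is_category_def by blast

lemma category_Comp_assoc:
  assumes "is_category C" "f \<in> Ar C" "g \<in> Ar C" "h \<in> Ar C" "Cod C f = Dom C g" "Cod C g = Dom C h"
  shows "Comp C (Comp C f g) h = Comp C f (Comp C g h)"
  using assms unfolding is_category_def by blast

lemma functor_Ar:
  assumes "is_functor C E Fo Fa" "f \<in> Ar C"
  shows "Fa f \<in> Ar E" "Dom E (Fa f) = Fo (Dom C f)" "Cod E (Fa f) = Fo (Cod C f)"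
  using assms unfolding is_functor_def by blast+

lemma functor_Id:
  assumes "is_functor C E Fo Fa" "a \<in> Ob C"
  shows "Fa (Id C a) = Id E (Fo a)"
  using assms unfolding is_functor_def by blast

lemma functor_Comp:
  assumes "is_functor C E Fo Fa" "f \<in> Ar C" "g \<in> Ar C" "Cod C f = Dom C g"
  shows "Fa (Comp C f g) = Comp E (Fa f) (Fa g)"
  using assms unfolding is_functor_def by blast

locale refinement_system =
  fixes D :: "('o,'a) cat" and T :: "('x,'c) cat" and to :: "'o \<Rightarrow> 'x" and ta :: "'a \<Rightarrow> 'c"
  assumes D_category: "is_category D" and T_category: "is_category T"
    and functor_t: "is_functor D T to ta"
begin

lemma Der_Comp:
  assumes "\<alpha> \<in> Der D ta P c R" "\<beta> \<in> Der D ta R d S"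
  shows "Comp D \<alpha> \<beta> \<in> Der D ta P (Comp T c d) S"
  using assms category_Comp[OF D_category, of \<alpha> \<beta>] functor_Comp[OF functor_t, of \<alpha> \<beta>]
  by (auto simp: Der_def)

lemma Der_Id:
  assumes "P \<in> Ob D"
  shows "Id D P \<in> Der D ta P (Id T (to P)) P"
  using category_Id[OF D_category assms] functor_Id[OF functor_t assms] by (simp add: Der_def)

lemma Der_type:
  assumes "\<alpha> \<in> Der D ta P c R"
  shows "c \<in> Ar T" "Dom T c = to P" "Cod T c = to R"
  using assms functor_Ar[OF functor_t, of \<alpha>] by (auto simp: Der_def)

lemma Der_act_Id_right:
  assumes "\<beta> \<in> Der D ta P c R" "\<alpha> \<in> Der D ta R d S"
  shows "Der_act D \<beta> (Id D S) \<alpha> = Comp D \<beta> \<alpha>"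
  using assms category_Comp[OF D_category, of \<beta> \<alpha>] category_Comp_Id_right[OF D_category]
  by (simp add: Der_act_def Der_def)

lemma Der_act_Id_left:
  assumes "\<alpha> \<in> Der D ta P c R" "\<gamma> \<in> Der D ta R d S"
  shows "Der_act D (Id D P) \<gamma> \<alpha> = Comp D \<alpha> \<gamma>"
  using assms category_Comp_Id_left[OF D_category] by (simp add: Der_act_def Der_def)

lemma Der_Comp_assoc:
  assumes "\<alpha> \<in> Der D ta P c R" "\<beta> \<in> Der D ta R d S" "\<gamma> \<in> Der D ta S e U"
  shows "Comp D (Comp D \<alpha> \<beta>) \<gamma> = Comp D \<alpha> (Comp D \<beta> \<gamma>)"
  using assms category_Comp_assoc[OF D_category, of \<alpha> \<beta> \<gamma>] by (simp add: Der_def)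

end

locale refined_object = refinement_system +
  fixes Q :: 'o and B :: 'x
  assumes Q_Ob: "Q \<in> Ob D" and Q_refines: "to Q = B"
begin

lemma Id_Q: "Id D Q \<in> Der D ta Q (Id T B) Q"
  using Der_Id[OF Q_Ob] Q_refines by simp

lemma Id_B: "Id T B \<in> Ar T" "Dom T (Id T B) = B" "Cod T (Id T B) = B"
  using Der_type[OF Id_Q] Q_refines by simp_all

lemma Qplus_represented:
  assumes "x \<in> plus_obs D T to B" and "v \<in> Qplus D ta Q x"
  shows "v \<in> plus_hom D T ta x (Q, Id T B) \<and> Qplus_act D v (Id D Q) = v"
proof -
  obtain P c where x: "x = (P, c)" by fastforce
  with assms have v: "v \<in> Der D ta P c Q" by (simp add: Qplus_def)
  then have "c = Comp T (ta v) (Id T B)"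
    using Der_type[OF v] category_Comp_Id_right[OF T_category] Q_refines by (auto simp: Der_def)
  then show ?thesis
    using v category_Comp_Id_right[OF D_category]
    by (auto simp: x plus_hom_def Qplus_act_def Der_def)
qed

lemma Der_bra_right_unit:
  assumes "y \<in> minus_obs D T to B"
  shows "Der_bra_right D T ta y (Q, Id T B) = Qminus D ta Q y"
  using assms category_Comp_Id_left[OF T_category] by (auto simp: Der_bra_right_def Qminus_def minus_obs_def)

lemma Qplus_act_closed:
  assumes "f \<in> plus_hom D T ta a b" and "v \<in> Qplus D ta Q b"
  shows "Qplus_act D f v \<in> Qplus D ta Q a"
proof -
  have "f \<in> Der D ta (fst a) (ta f) (fst b)" "snd a = Comp T (ta f) (snd b)"
    using assms(1) by (auto simp: plus_hom_def Der_def)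
  with Der_Comp[of f _ _ _ v] assms(2) show ?thesis
    by (simp add: Qplus_act_def Qplus_def)
qed

lemma Qminus_yoneda_bij:
  assumes y: "y \<in> minus_obs D T to B"
  shows "bij_betw (yoneda_ext (plus_obs D T to B) (Qplus D ta Q) (\<lambda>\<beta>. Der_act D \<beta> (Id D (snd y))))
           (Qminus D ta Q y) (perp_right D T to ta B (Qplus D ta Q) (Qplus_act D) y)"
  unfolding perp_right_def Der_bra_right_unit[OF y, symmetric]
proof (rule bij_betw_yoneda_ext)
  show "(Q, Id T B) \<in> plus_obs D T to B" "Id D Q \<in> Qplus D ta Q (Q, Id T B)"
    using Id_Q Id_B Q_Ob Q_refines by (auto simp: plus_obs_def Qplus_def)
next
  fix x v assume "x \<in> plus_obs D T to B" "v \<in> Qplus D ta Q x"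
  then show "v \<in> plus_hom D T ta x (Q, Id T B) \<and> Qplus_act D v (Id D Q) = v"
    by (rule Qplus_represented)
next
  fix g assume "g \<in> Der_bra_right D T ta y (Q, Id T B)"
  then show "Der_act D (Id D Q) (Id D (snd y)) g = g"
    using category_Comp_Id_left[OF D_category] category_Comp_Id_right[OF D_category]
    by (auto simp: Der_bra_right_def Der_def Der_act_def)
next
  fix x v g assume "v \<in> Qplus D ta Q x" "g \<in> Der_bra_right D T ta y (Q, Id T B)"
  then have v: "v \<in> Der D ta (fst x) (snd x) Q" and g: "g \<in> Der D ta Q (fst y) (snd y)"
    by (simp_all add: Der_bra_right_unit[OF y] Qplus_def Qminus_def)
  show "Der_act D v (Id D (snd y)) g \<in> Der_bra_right D T ta y x"
    using Der_Comp[OF v g] by (simp add: Der_act_Id_right[OF v g] Der_bra_right_def)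
next
  fix a b f v g assume f: "f \<in> plus_hom D T ta a b" and "v \<in> Qplus D ta Q b"
    and "g \<in> Der_bra_right D T ta y (Q, Id T B)"
  then have v: "v \<in> Der D ta (fst b) (snd b) Q" and g: "g \<in> Der D ta Q (fst y) (snd y)"
    and f': "f \<in> Der D ta (fst a) (ta f) (fst b)"
    by (auto simp: Der_bra_right_unit[OF y] Qplus_def Qminus_def plus_hom_def Der_def)
  have fv: "Qplus_act D f v \<in> Qplus D ta Q a"
    using f \<open>v \<in> Qplus D ta Q b\<close> by (rule Qplus_act_closed)
  then have "Comp D f v \<in> Der D ta (fst a) (snd a) Q" by (simp add: Qplus_act_def Qplus_def)
  then show "Qplus_act D f v \<in> Qplus D ta Q a \<and>
      Der_act D (Qplus_act D f v) (Id D (snd y)) g = Der_act D f (Id D (snd y)) (Der_act D v (Id D (snd y)) g)"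
    using fv Der_Comp[OF v g] Der_Comp_assoc[OF f' v g]
    by (simp add: Qplus_act_def Der_act_Id_right[OF _ g] Der_act_Id_right[OF v g] Der_act_Id_right[OF f'])
qed

lemma Qminus_yoneda_natural:
  assumes f: "f \<in> minus_hom D T ta a b" and "\<alpha> \<in> Qminus D ta Q b"
  shows "yoneda_ext (plus_obs D T to B) (Qplus D ta Q) (\<lambda>\<beta>. Der_act D \<beta> (Id D (snd a))) (Qminus_act D f \<alpha>)
       = perp_right_act D T to B (Qplus D ta Q) f
           (yoneda_ext (plus_obs D T to B) (Qplus D ta Q) (\<lambda>\<beta>. Der_act D \<beta> (Id D (snd b))) \<alpha>)"
proof (intro ext)
  fix x v
  have \<alpha>: "\<alpha> \<in> Der D ta Q (fst b) (snd b)" and f': "f \<in> Der D ta (snd b) (ta f) (snd a)"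
    using assms by (auto simp: Qminus_def minus_hom_def coslice_hom_def Der_def)
  show "yoneda_ext (plus_obs D T to B) (Qplus D ta Q) (\<lambda>\<beta>. Der_act D \<beta> (Id D (snd a))) (Qminus_act D f \<alpha>) x v
      = perp_right_act D T to B (Qplus D ta Q) f
          (yoneda_ext (plus_obs D T to B) (Qplus D ta Q) (\<lambda>\<beta>. Der_act D \<beta> (Id D (snd b))) \<alpha>) x v"
  proof (cases "x \<in> plus_obs D T to B \<and> v \<in> Qplus D ta Q x")
    case True
    then have v: "v \<in> Der D ta (fst x) (snd x) Q" by (simp add: Qplus_def)
    have "Der_act D v (Id D (snd a)) (Comp D \<alpha> f) = Comp D (Comp D v \<alpha>) f"
      using Der_act_Id_right[OF v Der_Comp[OF \<alpha> f']] Der_Comp_assoc[OF v \<alpha> f'] by simp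
    moreover have "Der_act D (Id D (fst x)) f (Der_act D v (Id D (snd b)) \<alpha>) = Comp D (Comp D v \<alpha>) f"
      using Der_act_Id_right[OF v \<alpha>] Der_act_Id_left[OF Der_Comp[OF v \<alpha>] f'] by simp
    ultimately show ?thesis
      using True by (simp add: yoneda_ext_def perp_right_act_def Qminus_act_def)
  qed (auto simp: yoneda_ext_def perp_right_act_def)
qed

lemma Qminus_iso_perp_Qplus:
  "nat_iso (minus_obs D T to B) (minus_hom D T ta) (Qminus D ta Q) (Qminus_act D)
     (perp_right D T to ta B (Qplus D ta Q) (Qplus_act D)) (perp_right_act D T to B (Qplus D ta Q))"
  unfolding nat_iso_def
  using Qminus_yoneda_bij Qminus_yoneda_natural
  by (intro exI[of _ "\<lambda>y. yoneda_ext (plus_obs D T to B) (Qplus D ta Q) (\<lambda>\<beta>. Der_act D \<beta> (Id D (snd y)))"]) blast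

lemma Qminus_represented:
  assumes "y \<in> minus_obs D T to B" and "w \<in> Qminus D ta Q y"
  shows "w \<in> minus_hom D T ta y (Id T B, Q) \<and> Qminus_act D w (Id D Q) = w"
proof -
  obtain d R where y: "y = (d, R)" by fastforce
  with assms have w: "w \<in> Der D ta Q d R" by (simp add: Qminus_def)
  then have "Comp T (Id T B) (ta w) = d"
    using Der_type[OF w] category_Comp_Id_left[OF T_category] Q_refines by (auto simp: Der_def)
  then show ?thesis
    using w category_Comp_Id_left[OF D_category]
    by (auto simp: y minus_hom_def coslice_hom_def Qminus_act_def Der_def)
qed

lemma Der_bra_left_unit:
  assumes "x \<in> plus_obs D T to B"
  shows "Der_bra_left D T ta x (Id T B, Q) = Qplus D ta Q x"
  using assms category_Comp_Id_right[OF T_category] by (auto simp: Der_bra_left_def Qplus_def plus_obs_def)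

lemma Qminus_act_closed:
  assumes "f \<in> minus_hom D T ta a b" and "w \<in> Qminus D ta Q b"
  shows "Qminus_act D f w \<in> Qminus D ta Q a"
proof -
  have "f \<in> Der D ta (snd b) (ta f) (snd a)" "fst a = Comp T (fst b) (ta f)"
    using assms(1) by (auto simp: minus_hom_def coslice_hom_def Der_def)
  with Der_Comp[of w _ _ _ f] assms(2) show ?thesis
    by (simp add: Qminus_act_def Qminus_def)
qed

lemma Qplus_yoneda_bij:
  assumes x: "x \<in> plus_obs D T to B"
  shows "bij_betw (yoneda_ext (minus_obs D T to B) (Qminus D ta Q) (\<lambda>\<gamma>. Der_act D (Id D (fst x)) \<gamma>))
           (Qplus D ta Q x) (perp_left D T to ta B (Qminus D ta Q) (Qminus_act D) x)"
  unfolding perp_left_def Der_bra_left_unit[OF x, symmetric]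
proof (rule bij_betw_yoneda_ext)
  show "(Id T B, Q) \<in> minus_obs D T to B" "Id D Q \<in> Qminus D ta Q (Id T B, Q)"
    using Id_Q Id_B Q_Ob Q_refines by (auto simp: minus_obs_def Qminus_def)
next
  fix y w assume "y \<in> minus_obs D T to B" "w \<in> Qminus D ta Q y"
  then show "w \<in> minus_hom D T ta y (Id T B, Q) \<and> Qminus_act D w (Id D Q) = w"
    by (rule Qminus_represented)
next
  fix g assume "g \<in> Der_bra_left D T ta x (Id T B, Q)"
  then show "Der_act D (Id D (fst x)) (Id D Q) g = g"
    using category_Comp_Id_left[OF D_category] category_Comp_Id_right[OF D_category]
    by (auto simp: Der_bra_left_def Der_def Der_act_def)
next
  fix y w g assume "w \<in> Qminus D ta Q y" "g \<in> Der_bra_left D T ta x (Id T B, Q)"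
  then have w: "w \<in> Der D ta Q (fst y) (snd y)" and g: "g \<in> Der D ta (fst x) (snd x) Q"
    by (simp_all add: Der_bra_left_unit[OF x] Qplus_def Qminus_def)
  show "Der_act D (Id D (fst x)) w g \<in> Der_bra_left D T ta x y"
    using Der_Comp[OF g w] by (simp add: Der_act_Id_left[OF g w] Der_bra_left_def)
next
  fix a b f w g assume f: "f \<in> minus_hom D T ta a b" and "w \<in> Qminus D ta Q b"
    and "g \<in> Der_bra_left D T ta x (Id T B, Q)"
  then have w: "w \<in> Der D ta Q (fst b) (snd b)" and g: "g \<in> Der D ta (fst x) (snd x) Q"
    and f': "f \<in> Der D ta (snd b) (ta f) (snd a)"
    by (auto simp: Der_bra_left_unit[OF x] Qplus_def Qminus_def minus_hom_def coslice_hom_def Der_def)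
  have wf: "Qminus_act D f w \<in> Qminus D ta Q a"
    using f \<open>w \<in> Qminus D ta Q b\<close> by (rule Qminus_act_closed)
  then have "Comp D w f \<in> Der D ta Q (fst a) (snd a)" by (simp add: Qminus_act_def Qminus_def)
  then show "Qminus_act D f w \<in> Qminus D ta Q a \<and>
      Der_act D (Id D (fst x)) (Qminus_act D f w) g = Der_act D (Id D (fst x)) f (Der_act D (Id D (fst x)) w g)"
    using wf Der_Comp[OF g w] Der_Comp_assoc[OF g w f']
    by (simp add: Qminus_act_def Der_act_Id_left[OF g] Der_act_Id_left[OF g w]
        Der_act_Id_left[OF _ f'])
qed

lemma Qplus_yoneda_natural:
  assumes f: "f \<in> plus_hom D T ta a b" and "\<alpha> \<in> Qplus D ta Q b"
  shows "yoneda_ext (minus_obs D T to B) (Qminus D ta Q) (\<lambda>\<gamma>. Der_act D (Id D (fst a)) \<gamma>) (Qplus_act D f \<alpha>)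
       = perp_left_act D T to B (Qminus D ta Q) f
           (yoneda_ext (minus_obs D T to B) (Qminus D ta Q) (\<lambda>\<gamma>. Der_act D (Id D (fst b)) \<gamma>) \<alpha>)"
proof (intro ext)
  fix y w
  have \<alpha>: "\<alpha> \<in> Der D ta (fst b) (snd b) Q" and f': "f \<in> Der D ta (fst a) (ta f) (fst b)"
    using assms by (auto simp: Qplus_def plus_hom_def Der_def)
  show "yoneda_ext (minus_obs D T to B) (Qminus D ta Q) (\<lambda>\<gamma>. Der_act D (Id D (fst a)) \<gamma>) (Qplus_act D f \<alpha>) y w
      = perp_left_act D T to B (Qminus D ta Q) f
          (yoneda_ext (minus_obs D T to B) (Qminus D ta Q) (\<lambda>\<gamma>. Der_act D (Id D (fst b)) \<gamma>) \<alpha>) y w"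
  proof (cases "y \<in> minus_obs D T to B \<and> w \<in> Qminus D ta Q y")
    case True
    then have w: "w \<in> Der D ta Q (fst y) (snd y)" by (simp add: Qminus_def)
    have "Der_act D (Id D (fst a)) w (Comp D f \<alpha>) = Comp D f (Comp D \<alpha> w)"
      using Der_act_Id_left[OF Der_Comp[OF f' \<alpha>] w] Der_Comp_assoc[OF f' \<alpha> w] by simp
    moreover have "Der_act D f (Id D (snd y)) (Der_act D (Id D (fst b)) w \<alpha>) = Comp D f (Comp D \<alpha> w)"
      using Der_act_Id_left[OF \<alpha> w] Der_act_Id_right[OF f' Der_Comp[OF \<alpha> w]] by simp
    ultimately show ?thesis
      using True by (simp add: yoneda_ext_def perp_left_act_def Qplus_act_def)
  qed (auto simp: yoneda_ext_def perp_left_act_def)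
qed

lemma Qplus_iso_perp_Qminus:
  "nat_iso (plus_obs D T to B) (plus_hom D T ta) (Qplus D ta Q) (Qplus_act D)
     (perp_left D T to ta B (Qminus D ta Q) (Qminus_act D)) (perp_left_act D T to B (Qminus D ta Q))"
  unfolding nat_iso_def
  using Qplus_yoneda_bij Qplus_yoneda_natural
  by (intro exI[of _ "\<lambda>x. yoneda_ext (minus_obs D T to B) (Qminus D ta Q) (\<lambda>\<gamma>. Der_act D (Id D (fst x)) \<gamma>)"]) blast

end

theorem theorem4p9:
  fixes D :: "('o,'a) cat" and T :: "('x,'c) cat"
    and to :: "'o \<Rightarrow> 'x" and ta :: "'a \<Rightarrow> 'c"
    and Q :: 'o and B :: 'x
  assumes "is_category D" and "is_category T" and "is_functor D T to ta"
    and "Q \<in> Ob D" and "to Q = B"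
  shows "nat_iso (minus_obs D T to B) (minus_hom D T ta)
           (Qminus D ta Q) (Qminus_act D)
           (perp_right D T to ta B (Qplus D ta Q) (Qplus_act D))
           (perp_right_act D T to B (Qplus D ta Q))
       \<and> nat_iso (plus_obs D T to B) (plus_hom D T ta)
           (Qplus D ta Q) (Qplus_act D)
           (perp_left D T to ta B (Qminus D ta Q) (Qminus_act D))
           (perp_left_act D T to B (Qminus D ta Q))"
proof -
  interpret refined_object D T to ta Q B
    using assms by unfold_locales
  show ?thesis using Qminus_iso_perp_Qplus Qplus_iso_perp_Qminus ..
qed

end
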